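(* There exist an environment $E$ and a total preorder $\succeq$ on $\Pi^E$ such that $\succeq\in\mathrm{Ord}_{\mathrm{GOMORL}}(E)$ but $\succeq\notin\mathrm{Ord}_{\mathrm{FPR}}(E)$; that is, no function $J:\Pi^E\to\mathbb R$ satisfies $\pi_1\succeq\pi_2\iff J(\pi_1)\ge J(\pi_2)$. (Such an ordering can be obtained from a GOMORL specification with $k=2$ and $\succeq_J$ the lexicographic order on $\mathbb R^2$.)
   Context: An environment is a tuple $E=(\mathcal S,\mathcal A,\mathcal T,\mathcal I)$ where $\mathcal S,\mathcal A$ are finite nonempty sets, $\mathcal T:\mathcal S\times\mathcal A\to\Delta(\mathcal S)$ and $\mathcal I\in\Delta(\mathcal S)$. A policy is a map $\pi:\mathcal S\to\Delta(\mathcal A)$ (stationary, possibly stochastic); $\Pi^E$ denotes the set of all policies. A trajectory $\xi=(s_0,a_0,s_1,a_1,\dots)$ is generated under $\pi$ by $s_0\sim\mathcal I$, $a_t\sim\pi(s_t)$, $s_{t+1}\sim\mathcal T(s_t,a_t)$; $\mathbb E^\pi_\xi$ denotes expectation under this distribution. An objective-specification formalism $X$ assigns to each environment $E$ a set of objective specifications, each inducing a total preorder $\succeq$ on $\Pi^E$; $\mathrm{Ord}_X(E)$ is the set of total preorders so induced. A specification defining a scalar $J:\Pi^E\to\mathbb R$ induces $\pi_1\succeq\pi_2\iff J(\pi_1)\ge J(\pi_2)$. FPR: specification $(J)$ with $J:\Pi^E\to\mathbb R$ an arbitrary function. GOMORL: specification $(k,\mathcal R,\gamma,\succeq_J)$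 with $k\in\mathbb N$, $\mathcal R:\mathcal S\times\mathcal A\times\mathcal S\to\mathbb R^k$ with components $\mathcal R_i$, $\gamma\in[0,1)$, $\succeq_J$ a total preorder on $\mathbb R^k$; with $\vec J(\pi)=(J_1(\pi),\dots,J_k(\pi))$, $J_i(\pi)=\mathbb E^\pi_\xi[\sum_{t=0}^\infty\gamma^t\mathcal R_i(s_t,a_t,s_{t+1})]$, it induces $\pi_1\succeq\pi_2\iff\vec J(\pi_1)\succeq_J\vec J(\pi_2)$. The lexicographic order on $\mathbb R^2$ is $(x_1,x_2)\succeq(y_1,y_2)$ iff $x_1>y_1$, or $x_1=y_1$ and $x_2\ge y_2$. *)

theory Defs
  imports "HOL-Probability.Probability"
begin

text \<open>Environments E = (S, A, T, I). States and actions are drawn from nat;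
  S and A are finite nonempty carrier sets (every finite environment is
  isomorphic to one of this form).\<close>

type_synonym env = "nat set \<times> nat set \<times> (nat \<Rightarrow> nat \<Rightarrow> nat pmf) \<times> nat pmf"
type_synonym policy = "nat \<Rightarrow> nat pmf"

definition env_S :: "env \<Rightarrow> nat set" where "env_S E = fst E"
definition env_A :: "env \<Rightarrow> nat set" where "env_A E = fst (snd E)"
definition env_T :: "env \<Rightarrow> nat \<Rightarrow> nat \<Rightarrow> nat pmf" where "env_T E = fst (snd (snd E))"
definition env_I :: "env \<Rightarrow> nat pmf" where "env_I E = snd (snd (snd E))"

definition wf_env :: "env \<Rightarrow> bool" where
  "wf_env E \<longleftrightarrow> finite (env_S E) \<and> env_S E \<noteq> {} \<and> finite (env_A E) \<and> env_A E \<noteq> {}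
     \<and> set_pmf (env_I E) \<subseteq> env_S E
     \<and> (\<forall>s\<in>env_S E. \<forall>a\<in>env_A E. set_pmf (env_T E s a) \<subseteq> env_S E)"

text \<open>Policies S \<rightarrow> \<Delta>(A), represented extensionally (fixed dummy value outside S).\<close>
definition policies :: "env \<Rightarrow> policy set" where
  "policies E = {\<pi>. (\<forall>s\<in>env_S E. set_pmf (\<pi> s) \<subseteq> env_A E)
                    \<and> (\<forall>s. s \<notin> env_S E \<longrightarrow> \<pi> s = return_pmf undefined)}"

fun state_dist :: "env \<Rightarrow> policy \<Rightarrow> nat \<Rightarrow> nat pmf" where
  "state_dist E \<pi> 0 = env_I E"
| "state_dist E \<pi> (Suc t) =
     bind_pmf (state_dist E \<pi> t) (\<lambda>s. bind_pmf (\<pi> s) (\<lambda>a. env_T E s a))"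

definition step_dist :: "env \<Rightarrow> policy \<Rightarrow> nat \<Rightarrow> (nat \<times> nat \<times> nat) pmf" where
  "step_dist E \<pi> t =
     bind_pmf (state_dist E \<pi> t) (\<lambda>s. bind_pmf (\<pi> s) (\<lambda>a.
        map_pmf (\<lambda>s'. (s, a, s')) (env_T E s a)))"

text \<open>Expected discounted return
  E_\<xi>[\<Sum>_t \<gamma>^t R(s_t,a_t,s_{t+1})] = \<Sum>_t \<gamma>^t E[R(s_t,a_t,s_{t+1})]
  (exchange justified since R is bounded on the finite S\<times>A\<times>S and \<gamma> < 1).\<close>
definition disc_return :: "env \<Rightarrow> (nat \<Rightarrow> nat \<Rightarrow> nat \<Rightarrow> real) \<Rightarrow> real \<Rightarrow> policy \<Rightarrow> real" where
  "disc_return E R \<gamma> \<pi> =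
     (\<Sum>t. \<gamma> ^ t * measure_pmf.expectation (step_dist E \<pi> t) (\<lambda>(s, a, s'). R s a s'))"

definition total_preorder_on :: "'b set \<Rightarrow> ('b \<times> 'b) set \<Rightarrow> bool" where
  "total_preorder_on X r \<longleftrightarrow> r \<subseteq> X \<times> X \<and> refl_on X r \<and> trans r \<and> total_on X r"

definition Ord_FPR :: "env \<Rightarrow> (policy \<times> policy) set set" where
  "Ord_FPR E = {r. \<exists>J :: policy \<Rightarrow> real.
      r = {(\<pi>1, \<pi>2). \<pi>1 \<in> policies E \<and> \<pi>2 \<in> policies E \<and> J \<pi>1 \<ge> J \<pi>2}}"

text \<open>GOMORL: vectors in \<real>^k are functions nat \<Rightarrow> real vanishing at indices \<ge> k;
  the reward has components Rs i for i < k.\<close>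
definition realvecs :: "nat \<Rightarrow> (nat \<Rightarrow> real) set" where
  "realvecs k = {x. \<forall>i\<ge>k. x i = 0}"

definition Jvec :: "env \<Rightarrow> nat \<Rightarrow> (nat \<Rightarrow> nat \<Rightarrow> nat \<Rightarrow> nat \<Rightarrow> real) \<Rightarrow> real \<Rightarrow> policy \<Rightarrow> (nat \<Rightarrow> real)" where
  "Jvec E k Rs \<gamma> \<pi> = (\<lambda>i. if i < k then disc_return E (Rs i) \<gamma> \<pi> else 0)"

definition Ord_GOMORL :: "env \<Rightarrow> (policy \<times> policy) set set" where
  "Ord_GOMORL E = {r. \<exists>(k::nat) Rs \<gamma> rJ.
      0 \<le> \<gamma> \<and> \<gamma> < 1 \<and> total_preorder_on (realvecs k) rJ \<and>
      r = {(\<pi>1, \<pi>2). \<pi>1 \<in> policies E \<and> \<pi>2 \<in> policies E \<and>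
                      (Jvec E k Rs \<gamma> \<pi>1, Jvec E k Rs \<gamma> \<pi>2) \<in> rJ}}"

end

theory Submission
  imports Defs
begin

text \<open>In a one-state environment with three actions, let the first reward component count
  plays of action 1 and the second plays of action 2, and order policies lexicographically
  by their value vectors. For each probability \<open>x \<in> (0,1)\<close> of playing action 1, the policy
  that otherwise plays action 0 is strictly worse than the one that otherwise plays action 2,
  and both are strictly worse than every policy with a larger \<open>x\<close>. A real-valued
  representation \<open>J\<close> would thus assign to every \<open>x\<close> a nondegenerate interval of values, these
  intervals being pairwise disjoint; choosing a rational in each embeds the uncountable
  interval \<open>(0,1)\<close> into \<open>\<rat>\<close>.\<close>

lemma countable_ordered_disjoint_intervals:
  fixes lo hi :: "'a::linorder \<Rightarrow> real"
  assumes nondegenerate: "\<And>x. x \<in> X \<Longrightarrow> lo x < hi x"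
    and ordered: "\<And>x y. x \<in> X \<Longrightarrow> y \<in> X \<Longrightarrow> x < y \<Longrightarrow> hi x \<le> lo y"
  shows "countable X"
proof -
  obtain q where q: "\<And>x. x \<in> X \<Longrightarrow> q x \<in> \<rat> \<and> lo x < q x \<and> q x < hi x"
    using Rats_dense_in_real[OF nondegenerate] by metis
  have "strict_mono_on X q"
  proof (rule strict_mono_onI)
    fix x y assume "x \<in> X" "y \<in> X" "x < y"
    then show "q x < q y"
      using q[of x] q[of y] ordered[of x y] by linarith
  qed
  then have "inj_on q X"
    by (rule strict_mono_on_imp_inj_on)
  moreover have "countable (q ` X)"
    using countable_subset[OF _ countable_rat] q by blast
  ultimately show ?thesis
    by (rule countable_image_inj_on[rotated])
qed

lemma disc_return_zero_discount:
  "disc_return E R 0 \<pi> = measure_pmf.expectation (step_dist E \<pi> 0) (\<lambda>(s, a, s'). R s a s')"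
proof -
  let ?c = "measure_pmf.expectation (step_dist E \<pi> 0) (\<lambda>(s, a, s'). R s a s')"
  have "(\<lambda>t. (0::real) ^ t * measure_pmf.expectation (step_dist E \<pi> t) (\<lambda>(s, a, s'). R s a s'))
        = (\<lambda>t. if t = 0 then ?c else 0)"
    by (auto simp: power_0_left)
  moreover have "(\<lambda>t. if t = 0 then ?c else 0) sums ?c"
    using sums_single[of 0 "\<lambda>_. ?c"] by simp
  ultimately show ?thesis
    unfolding disc_return_def by (simp add: sums_iff)
qed

lemma Jvec_in_realvecs: "Jvec E k Rs \<gamma> \<pi> \<in> realvecs k"
  by (simp add: Jvec_def realvecs_def)

definition gomorl_order ::
    "env \<Rightarrow> nat \<Rightarrow> (nat \<Rightarrow> nat \<Rightarrow> nat \<Rightarrow> nat \<Rightarrow> real) \<Rightarrow> real \<Rightarrow> ((nat \<Rightarrow> real) \<times> (nat \<Rightarrow> real)) set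
       \<Rightarrow> (policy \<times> policy) set" where
  "gomorl_order E k Rs \<gamma> rJ = {(\<pi>1, \<pi>2). \<pi>1 \<in> policies E \<and> \<pi>2 \<in> policies E \<and>
      (Jvec E k Rs \<gamma> \<pi>1, Jvec E k Rs \<gamma> \<pi>2) \<in> rJ}"

lemma gomorl_order_in_Ord_GOMORL:
  assumes "0 \<le> \<gamma>" "\<gamma> < 1" "total_preorder_on (realvecs k) rJ"
  shows "gomorl_order E k Rs \<gamma> rJ \<in> Ord_GOMORL E"
  using assms unfolding Ord_GOMORL_def gomorl_order_def by blast

lemma total_preorder_on_gomorl_order:
  assumes "total_preorder_on (realvecs k) rJ"
  shows "total_preorder_on (policies E) (gomorl_order E k Rs \<gamma> rJ)"
proof -
  have "(Jvec E k Rs \<gamma> \<pi>1, Jvec E k Rs \<gamma> \<pi>2) \<in> rJ \<or> (Jvec E k Rs \<gamma> \<pi>2, Jvec E k Rs \<gamma> \<pi>1) \<in> rJ"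
    for \<pi>1 \<pi>2
    using assms Jvec_in_realvecs unfolding total_preorder_on_def refl_on_def total_on_def by metis
  then show ?thesis
    using assms unfolding total_preorder_on_def gomorl_order_def refl_on_def trans_def total_on_def
    by auto
qed

definition lex_order2 :: "((nat \<Rightarrow> real) \<times> (nat \<Rightarrow> real)) set" where
  "lex_order2 = {(x, y). x \<in> realvecs 2 \<and> y \<in> realvecs 2 \<and> (y 0 < x 0 \<or> (x 0 = y 0 \<and> y 1 \<le> x 1))}"

lemma total_preorder_on_lex_order2: "total_preorder_on (realvecs 2) lex_order2"
  unfolding total_preorder_on_def lex_order2_def refl_on_def trans_def total_on_def
  by auto

definition three_armed_bandit :: env where
  "three_armed_bandit = ({0}, {0, 1, 2}, (\<lambda>s a. return_pmf 0), return_pmf 0)"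

lemma wf_env_three_armed_bandit: "wf_env three_armed_bandit"
  by (auto simp: wf_env_def three_armed_bandit_def env_S_def env_A_def env_T_def env_I_def)

lemma step_dist_three_armed_bandit_0:
  "step_dist three_armed_bandit \<pi> 0 = map_pmf (\<lambda>a. (0, a, 0)) (\<pi> 0)"
  by (simp add: step_dist_def three_armed_bandit_def env_I_def env_T_def bind_return_pmf map_pmf_def)

definition arm_rewards :: "nat \<Rightarrow> nat \<Rightarrow> nat \<Rightarrow> nat \<Rightarrow> real" where
  "arm_rewards i s a s' = (if i = 0 then of_bool (a = 1) else of_bool (a = 2))"

definition mixed_policy :: "real \<Rightarrow> nat \<Rightarrow> policy" where
  "mixed_policy x c = (\<lambda>s. if s = 0 then map_pmf (\<lambda>b. if b then 1 else c) (bernoulli_pmf x)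
                          else return_pmf undefined)"

abbreviation bandit_value :: "policy \<Rightarrow> nat \<Rightarrow> real" where
  "bandit_value \<equiv> Jvec three_armed_bandit 2 arm_rewards 0"

lemma mixed_policy_in_policies:
  "x \<in> {0..1} \<Longrightarrow> c \<in> {0, 2} \<Longrightarrow> mixed_policy x c \<in> policies three_armed_bandit"
  by (auto simp: policies_def mixed_policy_def three_armed_bandit_def env_S_def env_A_def)

lemma bandit_value_mixed_policy:
  assumes "x \<in> {0..1}" "c \<in> {0, 2}"
  shows "bandit_value (mixed_policy x c) 0 = x"
    and "bandit_value (mixed_policy x c) 1 = (if c = 2 then 1 - x else 0)"
  using assms
  by (auto simp: Jvec_def disc_return_zero_discount step_dist_three_armed_bandit_0
      mixed_policy_def arm_rewards_def)

lemma lex_bandit_order_not_in_Ord_FPR: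
  "gomorl_order three_armed_bandit 2 arm_rewards 0 lex_order2 \<notin> Ord_FPR three_armed_bandit"
proof
  let ?r = "gomorl_order three_armed_bandit 2 arm_rewards 0 lex_order2"
  assume "?r \<in> Ord_FPR three_armed_bandit"
  then obtain J :: "policy \<Rightarrow> real" where J: "?r = {(\<pi>1, \<pi>2).
      \<pi>1 \<in> policies three_armed_bandit \<and> \<pi>2 \<in> policies three_armed_bandit \<and> J \<pi>2 \<le> J \<pi>1}"
    by (auto simp: Ord_FPR_def)
  have less_iff_not_ge: "J (mixed_policy x c) < J (mixed_policy y d)
      \<longleftrightarrow> (mixed_policy x c, mixed_policy y d) \<notin> ?r"
    if "x \<in> {0<..<1}" "y \<in> {0<..<1}" "c \<in> {0, 2}" "d \<in> {0, 2}" for x y c d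
    using that mixed_policy_in_policies[of x c] mixed_policy_in_policies[of y d]
    by (auto simp: J)
  have not_ge: "(mixed_policy x c, mixed_policy y d) \<notin> ?r"
    if "x \<in> {0<..<1}" "y \<in> {0<..<1}" "c \<in> {0, 2}" "d \<in> {0, 2}"
       "x < y \<or> (x = y \<and> c = 0 \<and> d = 2)" for x y c d
    using that bandit_value_mixed_policy[of x c] bandit_value_mixed_policy[of y d]
    by (auto simp: gomorl_order_def lex_order2_def)
  have "countable {0<..<1::real}"
  proof (rule countable_ordered_disjoint_intervals)
    fix x y :: real
    assume "x \<in> {0<..<1}"
    then show "J (mixed_policy x 0) < J (mixed_policy x 2)"
      using less_iff_not_ge not_ge by simp
    assume "y \<in> {0<..<1}" "x < y"
    then show "J (mixed_policy x 2) \<le> J (mixed_policy y 0)"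
      using \<open>x \<in> {0<..<1}\<close> less_iff_not_ge not_ge by (simp add: less_imp_le)
  qed
  then show False
    using uncountable_open_interval[of 0 "1::real"] by simp
qed

theorem mainTheorem17:
  shows "\<exists>E r. wf_env E \<and> total_preorder_on (policies E) r
               \<and> r \<in> Ord_GOMORL E \<and> r \<notin> Ord_FPR E"
proof (intro exI conjI)
  let ?r = "gomorl_order three_armed_bandit 2 arm_rewards 0 lex_order2"
  show "wf_env three_armed_bandit"
    by (rule wf_env_three_armed_bandit)
  show "total_preorder_on (policies three_armed_bandit) ?r"
    by (rule total_preorder_on_gomorl_order[OF total_preorder_on_lex_order2])
  show "?r \<in> Ord_GOMORL three_armed_bandit"
    by (rule gomorl_order_in_Ord_GOMORL[OF _ _ total_preorder_on_lex_order2]) simp_all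
  show "?r \<notin> Ord_FPR three_armed_bandit"
    by (rule lex_bandit_order_not_in_Ord_FPR)
qed

end
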